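(* Let $\pi\in\mathfrak{S}_n$ avoid $231$. Let $A,B,C$ be the blocks of a collection of crossing $3$-cycles of $\pi$ (so $A<B<C$), and let $(e,f)$ with $e<f$ be a $2$-cycle of $\pi$. Then one of the following holds: (1) $f<A$; (2) $A<e<f<B$; (3) $A<e<B<f<C$; (4) $B<e<f<C$; (5) $C<e$.
   Context: A permutation avoids $231$ if there are no indices $i<j<k$ with $\pi_k<\pi_i<\pi_j$. A collection of crossing $3$-cycles of $\pi$ is a nonempty set of $3$-cycles $(a_i,c_i,b_i)$ (meaning $a_i\mapsto c_i\mapsto b_i\mapsto a_i$) of $\pi$, $i=1,\dots,p$, with $a_i<b_i<c_i$, such that $a_i<b_j<c_k$ for all $i,j,k$; its blocks are $A=\{a_i\}$, $B=\{b_i\}$, $C=\{c_i\}$. For sets $S,T$ and an element $t$, $S<T$ means $s<t'$ for all $s\in S,t'\in T$, and $S<t$ (resp. $t<S$) means $s<t$ (resp. $t<s$) for all $s\in S$. *)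

theory Defs
  imports "HOL-Combinatorics.Permutations"
begin

text \<open>Permutations of [n] = {1..n} are functions nat => nat with pi permutes {1..n}.\<close>

definition avoids231 :: "nat \<Rightarrow> (nat \<Rightarrow> nat) \<Rightarrow> bool" where
  "avoids231 n \<pi> \<longleftrightarrow>
     \<not> (\<exists>i j k. 1 \<le> i \<and> i < j \<and> j < k \<and> k \<le> n \<and> \<pi> k < \<pi> i \<and> \<pi> i < \<pi> j)"

text \<open>(a,b,c) represents the 3-cycle (a,c,b): a maps to c, c to b, b to a, with a<b<c.\<close>
definition is_3cycle :: "(nat \<Rightarrow> nat) \<Rightarrow> nat \<times> nat \<times> nat \<Rightarrow> bool" where
  "is_3cycle \<pi> t \<longleftrightarrow> (case t of (a, b, c) \<Rightarrow>
     a < b \<and> b < c \<and> \<pi> a = c \<and> \<pi> c = b \<and> \<pi> b = a)"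

definition crossing_3cycles :: "(nat \<Rightarrow> nat) \<Rightarrow> (nat \<times> nat \<times> nat) set \<Rightarrow> bool" where
  "crossing_3cycles \<pi> S \<longleftrightarrow> S \<noteq> {} \<and> finite S \<and> (\<forall>t\<in>S. is_3cycle \<pi> t) \<and>
     (\<forall>(a1,b1,c1)\<in>S. \<forall>(a2,b2,c2)\<in>S. \<forall>(a3,b3,c3)\<in>S. a1 < b2 \<and> b2 < c3)"

definition blockA :: "(nat \<times> nat \<times> nat) set \<Rightarrow> nat set" where
  "blockA S = (\<lambda>(a,b,c). a) ` S"
definition blockB :: "(nat \<times> nat \<times> nat) set \<Rightarrow> nat set" where
  "blockB S = (\<lambda>(a,b,c). b) ` S"
definition blockC :: "(nat \<times> nat \<times> nat) set \<Rightarrow> nat set" where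
  "blockC S = (\<lambda>(a,b,c). c) ` S"

definition set_lt_elt :: "nat set \<Rightarrow> nat \<Rightarrow> bool" where
  "set_lt_elt S t \<longleftrightarrow> (\<forall>s\<in>S. s < t)"
definition elt_lt_set :: "nat \<Rightarrow> nat set \<Rightarrow> bool" where
  "elt_lt_set t S \<longleftrightarrow> (\<forall>s\<in>S. t < s)"

end

theory Submission
  imports Defs
begin

text \<open>
  Relative to a single 3-cycle \<open>a < b < c\<close>, four 231 patterns leave the 2-cycle \<open>e < f\<close>
  only five possible positions, the regions below. For two crossing 3-cycles with
  \<open>a\<^sub>1 < a\<^sub>2\<close>, the pattern \<open>a\<^sub>1 a\<^sub>2 b\<^sub>2\<close> forces \<open>c\<^sub>2 < c\<^sub>1\<close>; with this, six more 231 patterns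
  show that both 3-cycles place \<open>(e, f)\<close> in the same region. Hence all 3-cycles of the
  collection agree on the region, and the region read off on the blocks is the claim.
\<close>

definition avoids231_on :: "nat set \<Rightarrow> (nat \<Rightarrow> nat) \<Rightarrow> bool" where
  "avoids231_on X \<pi> \<longleftrightarrow>
     \<not> (\<exists>i\<in>X. \<exists>j\<in>X. \<exists>k\<in>X. i < j \<and> j < k \<and> \<pi> k < \<pi> i \<and> \<pi> i < \<pi> j)"

lemma avoids231_onD:
  assumes "avoids231_on X \<pi>" "i \<in> X" "j \<in> X" "k \<in> X" "i < j" "j < k"
  shows "\<not> (\<pi> k < \<pi> i \<and> \<pi> i < \<pi> j)"
  using assms unfolding avoids231_on_def by blast

lemma avoids231_imp_avoids231_on:
  "avoids231 n \<pi> \<Longrightarrow> X \<subseteq> {1..n} \<Longrightarrow> avoids231_on X \<pi>"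
  unfolding avoids231_def avoids231_on_def subset_iff atLeastAtMost_iff by metis

lemma is_3cycle_moved:
  "is_3cycle \<pi> (a, b, c) \<Longrightarrow> {a, b, c} \<subseteq> {x. \<pi> x \<noteq> x}"
  unfolding is_3cycle_def by auto

lemma crossing_3cycles_is_3cycle:
  "crossing_3cycles \<pi> S \<Longrightarrow> t \<in> S \<Longrightarrow> is_3cycle \<pi> t"
  unfolding crossing_3cycles_def by blast

lemma crossing_3cyclesD:
  assumes "crossing_3cycles \<pi> S" "(a1, b1, c1) \<in> S" "(a2, b2, c2) \<in> S" "(a3, b3, c3) \<in> S"
  shows "a1 < b2" "b2 < c3"
proof -
  have "\<forall>(a1, b1, c1)\<in>S. \<forall>(a2, b2, c2)\<in>S. \<forall>(a3, b3, c3)\<in>S. a1 < b2 \<and> b2 < c3"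
    using assms(1) unfolding crossing_3cycles_def by (elim conjE)
  then have "\<forall>(a2', b2', c2')\<in>S. \<forall>(a3', b3', c3')\<in>S. a1 < b2' \<and> b2' < c3'"
    using assms(2) by (auto dest: bspec)
  then have "\<forall>(a3', b3', c3')\<in>S. a1 < b2 \<and> b2 < c3'"
    using assms(3) by (auto dest: bspec)
  then show "a1 < b2" "b2 < c3"
    using assms(4) by (auto dest: bspec)
qed

datatype region = Below_A | Between_A_B | Across_B | Between_B_C | Above_C

fun in_region :: "region \<Rightarrow> nat \<times> nat \<Rightarrow> nat \<times> nat \<times> nat \<Rightarrow> bool" where
  "in_region Below_A (e, f) (a, b, c) \<longleftrightarrow> f < a"
| "in_region Between_A_B (e, f) (a, b, c) \<longleftrightarrow> a < e \<and> f < b"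
| "in_region Across_B (e, f) (a, b, c) \<longleftrightarrow> a < e \<and> e < b \<and> b < f \<and> f < c"
| "in_region Between_B_C (e, f) (a, b, c) \<longleftrightarrow> b < e \<and> f < c"
| "in_region Above_C (e, f) (a, b, c) \<longleftrightarrow> c < e"

lemma region_exists:
  assumes no231: "avoids231_on X \<pi>" and pts: "{e, f, a, b, c} \<subseteq> X"
    and ef: "e < f" "\<pi> e = f" "\<pi> f = e" and cyc: "is_3cycle \<pi> (a, b, c)"
  shows "\<exists>r. in_region r (e, f) (a, b, c)"
proof -
  have abc: "a < b" "b < c" "\<pi> a = c" "\<pi> c = b" "\<pi> b = a"
    using cyc unfolding is_3cycle_def by simp_all
  then have ef_not_abc: "e \<noteq> a" "e \<noteq> b" "e \<noteq> c" "f \<noteq> a" "f \<noteq> b" "f \<noteq> c"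
    using ef by (metis less_not_refl)+
  \<comment> \<open>Each fact is named after the positions \<open>i < j < k\<close> of the 231 pattern it excludes.\<close>
  have eaf: False if "e < a" "a < f" "f < c"
    using avoids231_onD[OF no231, of e a f] pts that abc ef by auto
  have bcf: False if "e < a" "c < f"
    using avoids231_onD[OF no231, of b c f] pts that abc ef by auto
  have aeb: False if "a < e" "e < b" "c < f"
    using avoids231_onD[OF no231, of a e b] pts that abc ef by auto
  have aec: False if "a < e" "e < c" "c < f"
    using avoids231_onD[OF no231, of a e c] pts that abc ef by auto
  show ?thesis
  proof (cases "f < a")
    case True
    then have "in_region Below_A (e, f) (a, b, c)" by simp
    then show ?thesis ..
  next
    case False
    then have "a < f" using ef_not_abc by simp
    have "a < e"
    proof (rule ccontr)
      assume "\<not> a < e"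
      then have "e < a" using ef_not_abc by simp
      with \<open>a < f\<close> eaf have "c < f" using ef_not_abc by fastforce
      with \<open>e < a\<close> bcf show False by blast
    qed
    consider "f < b" | "e < b" "b < f" | "b < e" "f < c" | "b < e" "c < f"
      using ef_not_abc by (metis linorder_neqE_nat)
    then show ?thesis
    proof cases
      case 1
      with \<open>a < e\<close> have "in_region Between_A_B (e, f) (a, b, c)" by simp
      then show ?thesis ..
    next
      case 2
      with \<open>a < e\<close> aeb have "in_region Across_B (e, f) (a, b, c)"
        using ef_not_abc by fastforce
      then show ?thesis ..
    next
      case 3
      then have "in_region Between_B_C (e, f) (a, b, c)" by simp
      then show ?thesis ..
    next
      case 4
      with \<open>a < e\<close> aec have "in_region Above_C (e, f) (a, b, c)"
        using ef_not_abc by fastforce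
      then show ?thesis ..
    qed
  qed
qed

lemma is_3cycle_order_reversal:
  assumes no231: "avoids231_on X \<pi>" and pts: "{a1, a2, b2} \<subseteq> X"
    and cyc1: "is_3cycle \<pi> (a1, b1, c1)" and cyc2: "is_3cycle \<pi> (a2, b2, c2)"
    and "a1 < a2" "a2 < c1"
  shows "c2 < c1"
proof -
  have "c1 \<noteq> c2"
    using cyc1 cyc2 \<open>a1 < a2\<close> unfolding is_3cycle_def by auto
  moreover have "\<not> c1 < c2"
    using avoids231_onD[OF no231, of a1 a2 b2] pts cyc1 cyc2 assms(5,6)
    unfolding is_3cycle_def by auto
  ultimately show ?thesis by simp
qed

lemma region_unique_ordered:
  assumes no231: "avoids231_on X \<pi>" and pts: "{e, f, a1, b1, c1, a2, b2, c2} \<subseteq> X"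
    and ef: "e < f" "\<pi> e = f" "\<pi> f = e"
    and cyc1: "is_3cycle \<pi> (a1, b1, c1)" and cyc2: "is_3cycle \<pi> (a2, b2, c2)"
    and cross: "a2 < b1" "b1 < c2" "b2 < c1" and "a1 < a2"
    and r1: "in_region r1 (e, f) (a1, b1, c1)" and r2: "in_region r2 (e, f) (a2, b2, c2)"
  shows "r1 = r2"
proof -
  have abc: "a1 < b1" "b1 < c1" "\<pi> a1 = c1" "\<pi> c1 = b1" "\<pi> b1 = a1"
    "a2 < b2" "b2 < c2" "\<pi> a2 = c2" "\<pi> c2 = b2" "\<pi> b2 = a2"
    using cyc1 cyc2 unfolding is_3cycle_def by simp_all
  have "c2 < c1"
    using is_3cycle_order_reversal[OF no231 _ cyc1 cyc2 \<open>a1 < a2\<close>] pts abc cross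
    by simp
  have fa2b1: False if "f < a2" "a1 < e"
    using avoids231_onD[OF no231, of f a2 b1] pts that abc ef cross by auto
  have b2fb1: False if "b2 < f" "f < b1" "a2 < e"
    using avoids231_onD[OF no231, of b2 f b1] pts that abc ef cross \<open>a1 < a2\<close> by auto
  have b2eb1: False if "b2 < e" "e < b1"
    using avoids231_onD[OF no231, of b2 e b1] pts that abc ef cross \<open>a1 < a2\<close> by auto
  have ec2c1: False if "e < c2" "b1 < f" "f < b2"
    using avoids231_onD[OF no231, of e c2 c1] pts that abc ef \<open>c2 < c1\<close> by auto
  have fc2c1: False if "f < c2" "b1 < e" "e < b2"
    using avoids231_onD[OF no231, of f c2 c1] pts that abc ef \<open>c2 < c1\<close> by auto
  have a2ec1: False if "c2 < e" "e < c1"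
    using avoids231_onD[OF no231, of a2 e c1] pts that abc ef cross by auto
  note patterns = fa2b1 b2fb1 b2eb1 ec2c1 fc2c1 a2ec1
  \<comment> \<open>Each mismatch of regions contradicts the order of the points or yields one of these patterns.\<close>
  show ?thesis
    using r1 r2 abc(1,2,6,7) cross ef(1) \<open>a1 < a2\<close> \<open>c2 < c1\<close>
    apply (cases r1; cases r2; simp; (elim conjE)?)
    apply (rule patterns; linarith)+
    done
qed

lemma region_unique:
  assumes no231: "avoids231_on X \<pi>" and pts: "{e, f, a1, b1, c1, a2, b2, c2} \<subseteq> X"
    and ef: "e < f" "\<pi> e = f" "\<pi> f = e"
    and cyc1: "is_3cycle \<pi> (a1, b1, c1)" and cyc2: "is_3cycle \<pi> (a2, b2, c2)"
    and cross: "a1 < b2" "a2 < b1" "b1 < c2" "b2 < c1"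
    and r1: "in_region r1 (e, f) (a1, b1, c1)" and r2: "in_region r2 (e, f) (a2, b2, c2)"
  shows "r1 = r2"
proof (cases a1 a2 rule: linorder_cases)
  case less
  with assms show ?thesis by (intro region_unique_ordered)
next
  case equal
  then have "a1 < b1" "b1 < c1" "b1 = b2" "c1 = c2"
    using cyc1 cyc2 unfolding is_3cycle_def by auto
  with equal r1 r2 \<open>e < f\<close> show ?thesis
    by (cases r1; cases r2) auto
next
  case greater
  with assms have "r2 = r1"
    by (intro region_unique_ordered[of X \<pi> e f a2 b2 c2 a1 b1 c1]) auto
  then show ?thesis ..
qed

lemma crossing_3cycles_common_region:
  assumes no231: "avoids231_on {x. \<pi> x \<noteq> x} \<pi>" and S: "crossing_3cycles \<pi> S"
    and ef: "e < f" "\<pi> e = f" "\<pi> f = e"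
  shows "\<exists>r. \<forall>t\<in>S. in_region r (e, f) t"
proof -
  have cyc: "is_3cycle \<pi> (a, b, c)" if "(a, b, c) \<in> S" for a b c
    using S that by (rule crossing_3cycles_is_3cycle)
  have moved: "{e, f, a, b, c} \<subseteq> {x. \<pi> x \<noteq> x}" if "(a, b, c) \<in> S" for a b c
    using is_3cycle_moved[OF cyc[OF that]] ef by auto
  obtain a0 b0 c0 where t0: "(a0, b0, c0) \<in> S"
    using S unfolding crossing_3cycles_def by auto
  obtain r where r: "in_region r (e, f) (a0, b0, c0)"
    using region_exists[OF no231 moved[OF t0] ef cyc[OF t0]] by blast
  have "in_region r (e, f) (a, b, c)" if t: "(a, b, c) \<in> S" for a b c
  proof -
    obtain r' where r': "in_region r' (e, f) (a, b, c)"
      using region_exists[OF no231 moved[OF t] ef cyc[OF t]] by blast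
    have "r' = r"
    proof (rule region_unique[OF no231 _ ef cyc[OF t] cyc[OF t0] _ _ _ _ r' r])
      show "{e, f, a, b, c, a0, b0, c0} \<subseteq> {x. \<pi> x \<noteq> x}"
        using moved[OF t] moved[OF t0] by auto
    qed (use crossing_3cyclesD[OF S] t t0 in blast)+
    with r' show ?thesis by simp
  qed
  then show ?thesis by (metis prod_cases3)
qed

theorem lemma3p4:
  fixes n :: nat and \<pi> :: "nat \<Rightarrow> nat" and S :: "(nat \<times> nat \<times> nat) set" and e f :: nat
  assumes "\<pi> permutes {1..n}"
    and "avoids231 n \<pi>"
    and "crossing_3cycles \<pi> S"
    and "e < f" and "\<pi> e = f" and "\<pi> f = e"
  shows "elt_lt_set f (blockA S)
      \<or> (set_lt_elt (blockA S) e \<and> e < f \<and> elt_lt_set f (blockB S))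
      \<or> (set_lt_elt (blockA S) e \<and> elt_lt_set e (blockB S) \<and> set_lt_elt (blockB S) f \<and> elt_lt_set f (blockC S))
      \<or> (set_lt_elt (blockB S) e \<and> e < f \<and> elt_lt_set f (blockC S))
      \<or> set_lt_elt (blockC S) e"
proof -
  have "{x. \<pi> x \<noteq> x} \<subseteq> {1..n}"
    using assms(1) by (simp add: permutes_altdef)
  then have "avoids231_on {x. \<pi> x \<noteq> x} \<pi>"
    by (rule avoids231_imp_avoids231_on[OF assms(2)])
  then obtain r where "\<forall>t\<in>S. in_region r (e, f) t"
    using crossing_3cycles_common_region assms(3-6) by blast
  with \<open>e < f\<close> show ?thesis
    by (cases r) (auto simp: elt_lt_set_def set_lt_elt_def blockA_def blockB_def blockC_def)
qed

end
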